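(* Let $E_1,\dots,E_m$ be mutually independent events on a probability space, and for $\mathcal S\subseteq[m]$ let $U(\mathcal S)=\mathbf P\big(\bigcup_{i\in\mathcal S}E_i\big)$. Let $1\le k\le m$ and let $\mathcal S_G=\{f_1,\dots,f_k\}$ be a greedy solution, defined by $\mathcal S_G^0=\emptyset$, $\mathcal S_G^i=\mathcal S_G^{i-1}\cup\{f_i\}$, where $$f_i\in\arg\max_{f\in[m]\setminus\mathcal S_G^{i-1}}\Big(U(\mathcal S_G^{i-1}\cup\{f\})-U(\mathcal S_G^{i-1})\Big),\quad 1\le i\le k,$$ and $\mathcal S_G=\mathcal S_G^k$. Then $\mathcal S_G$ maximizes $U(\mathcal S)$ over all $\mathcal S\subseteq[m]$ with $|\mathcal S|=k$, i.e. $\mathcal S_G$ equals an optimal $k$-element solution. *)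

theory Defs
  imports "HOL-Probability.Probability"
begin

definition union_prob :: "'a measure \<Rightarrow> (nat \<Rightarrow> 'a set) \<Rightarrow> nat set \<Rightarrow> real" where
  "union_prob M E S = measure M (\<Union>i\<in>S. E i)"

definition greedy_seq :: "'a measure \<Rightarrow> (nat \<Rightarrow> 'a set) \<Rightarrow> nat \<Rightarrow> nat \<Rightarrow> (nat \<Rightarrow> nat) \<Rightarrow> bool" where
  "greedy_seq M E m k f \<longleftrightarrow>
     (\<forall>i\<in>{1..k}.
        f i \<in> {1..m} - f ` {1..<i} \<and>
        (\<forall>g\<in>{1..m} - f ` {1..<i}.
           union_prob M E (f ` {1..<i} \<union> {g}) - union_prob M E (f ` {1..<i})
             \<le> union_prob M E (f ` {1..<i} \<union> {f i}) - union_prob M E (f ` {1..<i})))"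

end

theory Submission
  imports Defs
begin

text \<open>For independent events the complements are independent as well, so
  \<open>U(S) = 1 - \<Prod>i\<in>S. (1 - P(E i))\<close>. The marginal gain of adding \<open>g\<close> to \<open>T\<close> is then
  \<open>(\<Prod>i\<in>T. 1 - P(E i)) \<cdot> P(E g)\<close>, so as long as the union of the events picked so far
  is not almost sure, the greedy choice is an event of largest probability. Hence the greedy
  set minimizes the product \<open>\<Prod>i\<in>S. (1 - P(E i))\<close> over all \<open>k\<close>-sets, by an exchange
  argument; once the product has dropped to zero it is minimal anyway.\<close>

lemma fresh_picks_inj_on:
  fixes f :: "nat \<Rightarrow> 'b"
  assumes "\<And>i. i \<in> {1..k} \<Longrightarrow> f i \<notin> f ` {1..<i}"
  shows "inj_on f {1..k}"
proof (rule linorder_inj_onI')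
  fix i j assume "i \<in> {1..k}" "j \<in> {1..k}" "i < j"
  then have "f i \<in> f ` {1..<j}" by auto
  then show "f i \<noteq> f j" using assms[of j] \<open>j \<in> {1..k}\<close> by auto
qed

lemma prod_greedy_le_prod:
  fixes q :: "'b \<Rightarrow> 'c::linordered_idom" and f :: "nat \<Rightarrow> 'b"
  assumes nonneg: "\<And>a. a \<in> A \<Longrightarrow> 0 \<le> q a"
    and fresh: "\<And>i. i \<in> {1..k} \<Longrightarrow> f i \<in> A - f ` {1..<i}"
    and least: "\<And>i g. i \<in> {1..k} \<Longrightarrow> g \<in> A - f ` {1..<i} \<Longrightarrow>
        0 < prod q (f ` {1..<i}) \<Longrightarrow> q (f i) \<le> q g"
    and "S \<subseteq> A" "card S = k"
  shows "prod q (f ` {1..k}) \<le> prod q S"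
  using assms(4,5) fresh least
proof (induction k arbitrary: S)
  case 0
  then show ?case by (cases "finite S") auto
next
  case (Suc k)
  let ?F = "f ` {1..k}"
  have finite_S: "finite S" using Suc.prems(2) by (simp add: card_ge_0_finite)
  have "card ?F < card S"
    using Suc.prems(2) card_image_le[of "{1..k}" f] by simp
  then have "\<not> S \<subseteq> ?F" using card_mono[of ?F S] by auto
  then obtain s where s: "s \<in> S" "s \<notin> ?F" by blast
  have F_le: "prod q ?F \<le> prod q (S - {s})"
    using Suc.prems s finite_S by (intro Suc.IH) auto
  have fresh_last: "f (Suc k) \<in> A - ?F"
    using Suc.prems(3)[of "Suc k"] by (simp add: atLeastLessThanSuc_atLeastAtMost)
  have F_nonneg: "0 \<le> prod q ?F"
    using Suc.prems(3) nonneg by (intro prod_nonneg) (force simp: atLeastLessThanSuc_atLeastAtMost)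
  have split_F: "prod q (f ` {1..Suc k}) = q (f (Suc k)) * prod q ?F"
    using fresh_last by (simp add: atLeastAtMostSuc_conv)
  have split_S: "prod q S = q s * prod q (S - {s})"
    using finite_S s(1) by (simp add: prod.remove)
  show ?case
  proof (cases "prod q ?F = 0")
    case True
    have "0 \<le> prod q S" using Suc.prems(1) nonneg by (intro prod_nonneg) auto
    then show ?thesis unfolding split_F True by simp
  next
    case False
    then have "0 < prod q ?F" using F_nonneg by linarith
    then have "q (f (Suc k)) \<le> q s"
      using Suc.prems s by (intro Suc.prems(4)[of "Suc k"])
        (auto simp: atLeastLessThanSuc_atLeastAtMost)
    then show ?thesis
      unfolding split_F split_S
      using F_le F_nonneg nonneg[of s] s Suc.prems(1) by (intro mult_mono) auto
  qed
qed

context prob_space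
begin

lemma union_prob_indep_events:
  assumes "indep_events E I" "S \<subseteq> I" "finite S"
  shows "union_prob M E S = 1 - (\<Prod>i\<in>S. 1 - prob (E i))"
proof (cases "S = {}")
  case True
  then show ?thesis by (simp add: union_prob_def)
next
  case False
  have events: "E i \<in> events" if "i \<in> I" for i
    using assms(1) that unfolding indep_events_def by blast
  have "indep_sets (\<lambda>i. sigma_sets (space M) {E i}) I"
    using assms(1) unfolding indep_events_def_alt
    by (rule indep_sets_sigma) (auto simp: Int_stable_def)
  then have "prob (\<Inter>i\<in>S. space M - E i) = (\<Prod>i\<in>S. prob (space M - E i))"
    using assms(2) False assms(3) by (rule indep_setsD) (auto intro: sigma_sets.Compl sigma_sets.Basic)
  also have "\<dots> = (\<Prod>i\<in>S. 1 - prob (E i))"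
    using assms(2) events by (intro prod.cong) (auto simp: prob_compl)
  finally have complements: "prob (\<Inter>i\<in>S. space M - E i) = (\<Prod>i\<in>S. 1 - prob (E i))" .
  have "(\<Union>i\<in>S. E i) = space M - (\<Inter>i\<in>S. space M - E i)"
    using assms(2) events False sets.sets_into_space by blast
  moreover have "(\<Inter>i\<in>S. space M - E i) \<in> events"
    using assms(2,3) events False by (intro sets.finite_INT) auto
  ultimately have "prob (\<Union>i\<in>S. E i) = 1 - prob (\<Inter>i\<in>S. space M - E i)"
    by (simp only: prob_compl)
  then show ?thesis
    unfolding union_prob_def complements .
qed

lemma union_prob_insert_indep_events:
  assumes "indep_events E I" "T \<subseteq> I" "finite T" "g \<in> I - T"
  shows "union_prob M E (T \<union> {g}) - union_prob M E T = (\<Prod>i\<in>T. 1 - prob (E i)) * prob (E g)"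
  using assms union_prob_indep_events[OF assms(1), of T] union_prob_indep_events[OF assms(1), of "T \<union> {g}"]
  by (simp add: algebra_simps)

lemma greedy_seq_picks_most_likely:
  assumes "indep_events E {1..m}" "greedy_seq M E m k f" "i \<in> {1..k}" "g \<in> {1..m} - f ` {1..<i}"
    and "union_prob M E (f ` {1..<i}) < 1"
  shows "prob (E g) \<le> prob (E (f i))"
proof -
  let ?T = "f ` {1..<i}"
  have greedy: "f j \<in> {1..m} - f ` {1..<j}" if "j \<in> {1..i}" for j
    using assms(2,3) that unfolding greedy_seq_def by auto
  have T_sub: "?T \<subseteq> {1..m}" using greedy by force
  have fresh: "f i \<in> {1..m} - ?T" using greedy assms(3) by auto
  have gain: "union_prob M E (?T \<union> {h}) - union_prob M E ?T = (\<Prod>j\<in>?T. 1 - prob (E j)) * prob (E h)"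
    if "h \<in> {1..m} - ?T" for h
    using union_prob_insert_indep_events[OF assms(1) T_sub _ that] by simp
  have "union_prob M E (?T \<union> {g}) - union_prob M E ?T
      \<le> union_prob M E (?T \<union> {f i}) - union_prob M E ?T"
    using assms(2-4) unfolding greedy_seq_def by blast
  then have "(\<Prod>j\<in>?T. 1 - prob (E j)) * prob (E g) \<le> (\<Prod>j\<in>?T. 1 - prob (E j)) * prob (E (f i))"
    unfolding gain[OF assms(4)] gain[OF fresh] .
  moreover have "0 < (\<Prod>j\<in>?T. 1 - prob (E j))"
    using assms(5) T_sub union_prob_indep_events[OF assms(1), of ?T] by simp
  ultimately show ?thesis by simp
qed

end

theorem lemma2:
  fixes M :: "'a measure" and E :: "nat \<Rightarrow> 'a set" and m k :: nat and f :: "nat \<Rightarrow> nat"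
  assumes "prob_space M"
    and "\<And>i. i \<in> {1..m} \<Longrightarrow> E i \<in> sets M"
    and "prob_space.indep_events M E {1..m}"
    and "1 \<le> k" and "k \<le> m"
    and "greedy_seq M E m k f"
  shows "f ` {1..k} \<subseteq> {1..m} \<and> card (f ` {1..k}) = k \<and>
         (\<forall>S. S \<subseteq> {1..m} \<and> card S = k \<longrightarrow> union_prob M E S \<le> union_prob M E (f ` {1..k}))"
proof -
  interpret prob_space M by (rule assms(1))
  define q where "q i = 1 - prob (E i)" for i
  have U: "union_prob M E S = 1 - prod q S" if "S \<subseteq> {1..m}" for S
    unfolding q_def using union_prob_indep_events[OF assms(3) that] that finite_subset by blast
  have fresh: "f i \<in> {1..m} - f ` {1..<i}" if "i \<in> {1..k}" for i
    using assms(6) that unfolding greedy_seq_def by blast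
  then have F_sub: "f ` {1..k} \<subseteq> {1..m}" by force
  have "inj_on f {1..k}"
    by (rule fresh_picks_inj_on) (use fresh in blast)
  then have "card (f ` {1..k}) = k" by (simp add: card_image)
  moreover have "prod q (f ` {1..k}) \<le> prod q S" if "S \<subseteq> {1..m}" "card S = k" for S
  proof (rule prod_greedy_le_prod[OF _ fresh _ that])
    show "q (f i) \<le> q g" if "i \<in> {1..k}" "g \<in> {1..m} - f ` {1..<i}" "0 < prod q (f ` {1..<i})" for i g
      using greedy_seq_picks_most_likely[OF assms(3,6) that(1,2)] that U[of "f ` {1..<i}"] fresh
      unfolding q_def by force
  qed (simp add: q_def)
  ultimately show ?thesis using F_sub U by auto
qed

end
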